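(* Let $(A,B)$ be a complete bipartite graph with parts $A$ and $B$, $|A|,|B|>2$, whose edges are coloured red and blue so that every vertex of $A$ is incident to at least one blue edge and every vertex of $B$ is incident to at least one red edge. Then $(A,B)$ contains a cycle of length $4$ whose edges are alternately red and blue. *)

theory Defs
  imports Main
begin

datatype colour = Red | Blue

text \<open>A red/blue edge colouring of the complete bipartite graph with parts A and B is
  given by a function c; only its values c a b with a in A and b in B matter
  (c a b is the colour of the edge ab).\<close>

definition alt_C4 :: "'v set \<Rightarrow> 'v set \<Rightarrow> ('v \<Rightarrow> 'v \<Rightarrow> colour) \<Rightarrow> bool" where
  "alt_C4 A B c \<longleftrightarrow> (\<exists>a1 a2 b1 b2. a1 \<in> A \<and> a2 \<in> A \<and> b1 \<in> B \<and> b2 \<in> B \<and>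
      a1 \<noteq> a2 \<and> b1 \<noteq> b2 \<and>
      c a1 b1 = Red \<and> c a2 b1 = Blue \<and> c a2 b2 = Red \<and> c a1 b2 = Blue)"

end

theory Submission
  imports Defs
begin

text \<open>Without an alternating 4-cycle the red neighbourhoods of the vertices of A are
  nested, so some vertex s of A has the largest one. Take a blue edge s b and a red
  edge a b: then b lies in the red neighbourhood of a, hence in that of s, a contradiction.\<close>

definition red_nbhd :: "'v set \<Rightarrow> ('v \<Rightarrow> 'v \<Rightarrow> colour) \<Rightarrow> 'v \<Rightarrow> 'v set" where
  "red_nbhd B c a = {b \<in> B. c a b = Red}"

lemma finite_chain_has_greatest:
  fixes F :: "'i \<Rightarrow> 'a set"
  assumes "finite I" "I \<noteq> {}"
    and "\<And>i j. i \<in> I \<Longrightarrow> j \<in> I \<Longrightarrow> F i \<subseteq> F j \<or> F j \<subseteq> F i"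
  obtains s where "s \<in> I" "\<And>i. i \<in> I \<Longrightarrow> F i \<subseteq> F s"
  using assms
proof (induction I arbitrary: thesis rule: finite_ne_induct)
  case (singleton x)
  then show ?case by blast
next
  case (insert x I)
  obtain s where s: "s \<in> I" "\<And>i. i \<in> I \<Longrightarrow> F i \<subseteq> F s"
    using insert.IH insert.prems(2) by blast
  show ?case
  proof (cases "F x \<subseteq> F s")
    case True
    with s show ?thesis using insert.prems(1) by blast
  next
    case False
    then have "F s \<subseteq> F x" using insert.prems(2) s(1) by blast
    with s show ?thesis using insert.prems(1) by blast
  qed
qed

lemma red_nbhds_nested_if_no_alt_C4:
  assumes "\<not> alt_C4 A B c" "a1 \<in> A" "a2 \<in> A"
  shows "red_nbhd B c a1 \<subseteq> red_nbhd B c a2 \<or> red_nbhd B c a2 \<subseteq> red_nbhd B c a1"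
proof (rule ccontr)
  assume "\<not> ?thesis"
  then obtain b1 b2 where
    b1: "b1 \<in> B" "c a1 b1 = Red" "c a2 b1 \<noteq> Red" and
    b2: "b2 \<in> B" "c a2 b2 = Red" "c a1 b2 \<noteq> Red"
    unfolding red_nbhd_def by blast
  have "c a2 b1 = Blue" "c a1 b2 = Blue"
    using b1(3) b2(3) colour.exhaust by blast+
  moreover have "a1 \<noteq> a2" "b1 \<noteq> b2"
    using b1 b2 by auto
  ultimately have "alt_C4 A B c"
    unfolding alt_C4_def using assms(2,3) b1 b2 by blast
  with assms(1) show False ..
qed

theorem proposition2p3:
  fixes A B :: "'v set" and c :: "'v \<Rightarrow> 'v \<Rightarrow> colour"
  assumes "finite A" "finite B" "A \<inter> B = {}"
    and "card A > 2" "card B > 2"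
    and "\<forall>a\<in>A. \<exists>b\<in>B. c a b = Blue"
    and "\<forall>b\<in>B. \<exists>a\<in>A. c a b = Red"
  shows "alt_C4 A B c"
proof (rule ccontr)
  assume "\<not> alt_C4 A B c"
  moreover have "A \<noteq> {}"
    using assms(4) by auto
  ultimately obtain s where s: "s \<in> A" "\<And>a. a \<in> A \<Longrightarrow> red_nbhd B c a \<subseteq> red_nbhd B c s"
    using finite_chain_has_greatest[OF assms(1)] red_nbhds_nested_if_no_alt_C4 by metis
  obtain b where b: "b \<in> B" "c s b = Blue"
    using assms(6) s(1) by blast
  obtain a where a: "a \<in> A" "c a b = Red"
    using assms(7) b(1) by blast
  have "b \<in> red_nbhd B c s"
    using s(2)[OF a(1)] a(2) b(1) unfolding red_nbhd_def by blast
  with b(2) show False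
    unfolding red_nbhd_def by simp
qed

end
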